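(* Every univariate real polynomial $p$ that is not identically zero is amenable as a function $p:\mathbb{R}\to\mathbb{R}$.
   Context: Relative distance on $\mathbb{R}$: $\mathrm{dist}(x,y)=0$ if $x=y=0$, $\mathrm{dist}(x,y)=|\log(y/x)|$ if $xy>0$, and $\mathrm{dist}(x,y)=\infty$ otherwise. For a real analytic function $f$ on an open set $\Omega\subseteq\mathbb{R}$, not identically zero, the condition number is $\kappa(f,x)=0$ if $x=0$, $\kappa(f,x)=\infty$ if $x\neq0$ and $f(x)=0$, and $\kappa(f,x)=|x|\,|f'(x)|/|f(x)|$ otherwise; $\mu(f,x)=1+\kappa(f,x)$. $f:\Omega\to\mathbb{R}$ is amenable if there is $C>0$ such that for every $x\in\Omega$ with $\kappa(f,x)<\infty$, the set $B_x=\{y\in\mathbb{R}:\mathrm{dist}(y,x)<1/(C\mu(f,x))\}$ is contained in $\Omega$ and $\mu(f,y)\leq C\mu(f,x)$ for all $y\in B_x$. *)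

theory Defs
  imports "HOL-Analysis.Analysis" "HOL-Computational_Algebra.Polynomial"
begin

definition rel_dist :: "real \<Rightarrow> real \<Rightarrow> ereal" where
  "rel_dist x y =
     (if x = 0 \<and> y = 0 then 0
      else if x * y > 0 then ereal \<bar>ln (y / x)\<bar>
      else \<infinity>)"

definition cond_num :: "(real \<Rightarrow> real) \<Rightarrow> real \<Rightarrow> ereal" where
  "cond_num f x =
     (if x = 0 then 0
      else if f x = 0 then \<infinity>
      else ereal (\<bar>x\<bar> * \<bar>deriv f x\<bar> / \<bar>f x\<bar>))"

definition mu_cond :: "(real \<Rightarrow> real) \<Rightarrow> real \<Rightarrow> ereal" where
  "mu_cond f x = 1 + cond_num f x"

definition amenable :: "(real \<Rightarrow> real) \<Rightarrow> real set \<Rightarrow> bool" where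
  "amenable f \<Omega> \<longleftrightarrow>
     (\<exists>C::real. C > 0 \<and>
       (\<forall>x\<in>\<Omega>. cond_num f x < \<infinity> \<longrightarrow>
          {y. rel_dist y x < 1 / (ereal C * mu_cond f x)} \<subseteq> \<Omega> \<and>
          (\<forall>y. rel_dist y x < 1 / (ereal C * mu_cond f x) \<longrightarrow>
               mu_cond f y \<le> ereal C * mu_cond f x)))"

end

theory Submission
  imports Defs "HOL-Library.Landau_Symbols"
begin

(* Write e(x) = x p'(x) / p(x) for the elasticity of p, so that mu(p, x) = 1 + |e(x)| when x and
   p(x) are nonzero, and note that the points at relative distance < r from x are the x exp S
   with |S| < r. Comparing orders of vanishing at every point and degrees at infinity shows that
   x^2 p'' p is dominated by p^2 + (x p')^2 on all of R, i.e. |x^2 p''(x) / p(x)| <= A (1 + e(x)^2).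
   Along the path theta |-> x exp (theta S) the elasticity therefore obeys the Riccati-type
   inequality |de/dtheta| <= |S| (A + 2) (1 + e^2), so 1 / sqrt (1 + e^2) moves by at most
   |S| (A + 2). For |S| of order 1 / mu(p, x) this keeps 1 + |e| below 4 mu(p, x), which in turn
   bounds the logarithmic derivative of p along the path, so p cannot vanish there. *)

lemma inverse_sqrt_one_plus_square_lower_bound:
  fixes h h' :: "real \<Rightarrow> real"
  assumes t: "0 \<le> t"
    and h': "\<And>\<theta>. \<theta> \<in> {0..t} \<Longrightarrow> (h has_real_derivative h' \<theta>) (at \<theta>)"
    and h'_bound: "\<And>\<theta>. \<theta> \<in> {0..t} \<Longrightarrow> \<bar>h' \<theta>\<bar> \<le> L * (1 + (h \<theta>)\<^sup>2)"
  shows "inverse (sqrt (1 + (h 0)\<^sup>2)) - L * t \<le> inverse (sqrt (1 + (h t)\<^sup>2))"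
proof -
  define q where "q \<theta> = inverse (sqrt (1 + (h \<theta>)\<^sup>2))" for \<theta>
  have pos: "0 < 1 + u\<^sup>2" for u :: real
    by (simp add: add_pos_nonneg)
  have q': "(q has_real_derivative - (h \<theta> * h' \<theta> * (q \<theta>) ^ 3)) (at \<theta>)"
    if "\<theta> \<in> {0..t}" for \<theta>
  proof -
    have "(q has_real_derivative
        - (inverse (sqrt (1 + (h \<theta>)\<^sup>2)) / 2 * (2 * h \<theta> * h' \<theta>) * (inverse (sqrt (1 + (h \<theta>)\<^sup>2)))\<^sup>2)) (at \<theta>)"
      unfolding q_def using pos[of "h \<theta>"] h'[OF that]
      by (auto intro!: derivative_eq_intros simp: power2_eq_square)
    then show ?thesis
      using pos[of "h \<theta>"] by (simp add: q_def power2_eq_square power3_eq_cube field_simps)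
  qed
  have q'_bound: "\<bar>- (h \<theta> * h' \<theta> * (q \<theta>) ^ 3)\<bar> \<le> L" if "\<theta> \<in> {0..t}" for \<theta>
  proof -
    have "\<bar>h \<theta>\<bar> * q \<theta> \<le> 1"
      using pos[of "h \<theta>"] real_sqrt_abs[of "h \<theta>"] real_sqrt_le_mono[of "(h \<theta>)\<^sup>2" "1 + (h \<theta>)\<^sup>2"]
      by (simp add: q_def divide_le_eq_1 field_simps)
    moreover have "\<bar>h' \<theta>\<bar> * (q \<theta>)\<^sup>2 \<le> L"
      using h'_bound[OF that] pos[of "h \<theta>"]
      by (simp add: q_def power_inverse pos_divide_le_eq flip: divide_inverse)
    ultimately have "\<bar>h \<theta>\<bar> * q \<theta> * (\<bar>h' \<theta>\<bar> * (q \<theta>)\<^sup>2) \<le> 1 * L"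
      by (intro mult_mono) (auto simp: q_def)
    then show ?thesis
      by (simp add: abs_mult power2_eq_square power3_eq_cube q_def mult_ac)
  qed
  have "norm (q t - q 0) \<le> L * norm (t - 0)"
    by (rule field_differentiable_bound[where S = "{0..t}"])
      (use q' q'_bound t in \<open>auto intro: has_field_derivative_at_within\<close>)
  then show ?thesis
    using t by (simp add: q_def abs_le_iff)
qed

lemma riccati_growth_bound:
  fixes h h' :: "real \<Rightarrow> real"
  assumes t: "0 \<le> t"
    and h': "\<And>\<theta>. \<theta> \<in> {0..t} \<Longrightarrow> (h has_real_derivative h' \<theta>) (at \<theta>)"
    and h'_bound: "\<And>\<theta>. \<theta> \<in> {0..t} \<Longrightarrow> \<bar>h' \<theta>\<bar> \<le> L * (1 + (h \<theta>)\<^sup>2)"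
    and small: "2 * (L * t) * (1 + \<bar>h 0\<bar>) \<le> 1"
  shows "1 + \<bar>h t\<bar> \<le> 4 * (1 + \<bar>h 0\<bar>)"
proof -
  have "inverse (1 + \<bar>h 0\<bar>) \<le> inverse (sqrt (1 + (h 0)\<^sup>2))"
  proof (rule le_imp_inverse_le)
    show "sqrt (1 + (h 0)\<^sup>2) \<le> 1 + \<bar>h 0\<bar>"
      by (rule real_le_lsqrt) (simp_all add: power2_eq_square algebra_simps)
  qed (simp add: add_pos_nonneg)
  moreover have "L * t \<le> inverse (1 + \<bar>h 0\<bar>) / 2"
    using small by (simp add: field_simps)
  ultimately have "inverse (1 + \<bar>h 0\<bar>) / 2 \<le> inverse (sqrt (1 + (h t)\<^sup>2))"
    using inverse_sqrt_one_plus_square_lower_bound[OF t h' h'_bound] by linarith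
  then have "sqrt (1 + (h t)\<^sup>2) \<le> 2 * (1 + \<bar>h 0\<bar>)"
    by (simp add: field_simps add_pos_nonneg)
  moreover have "(1 + \<bar>h t\<bar>) / 2 \<le> sqrt (1 + (h t)\<^sup>2)"
  proof (rule real_le_rsqrt)
    have "0 \<le> (\<bar>h t\<bar> - 1)\<^sup>2" by simp
    then show "((1 + \<bar>h t\<bar>) / 2)\<^sup>2 \<le> 1 + (h t)\<^sup>2"
      by (simp add: power2_eq_square algebra_simps)
  qed
  ultimately show ?thesis
    by (simp add: field_simps)
qed

lemma abs_ge_exp_if_log_derivative_bounded:
  fixes \<phi> \<phi>' :: "real \<Rightarrow> real"
  assumes t: "0 \<le> t"
    and \<phi>': "\<And>\<theta>. \<theta> \<in> {0..t} \<Longrightarrow> (\<phi> has_real_derivative \<phi>' \<theta>) (at \<theta>)"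
    and nonzero: "\<And>\<theta>. \<theta> \<in> {0..t} \<Longrightarrow> \<phi> \<theta> \<noteq> 0"
    and \<phi>'_bound: "\<And>\<theta>. \<theta> \<in> {0..t} \<Longrightarrow> \<bar>\<phi>' \<theta>\<bar> \<le> K * \<bar>\<phi> \<theta>\<bar>"
  shows "\<bar>\<phi> 0\<bar> * exp (- (K * t)) \<le> \<bar>\<phi> t\<bar>"
proof -
  define \<psi> where "\<psi> \<theta> = ln ((\<phi> \<theta>)\<^sup>2)" for \<theta>
  have \<psi>': "(\<psi> has_real_derivative 2 * (\<phi>' \<theta> / \<phi> \<theta>)) (at \<theta>)" if "\<theta> \<in> {0..t}" for \<theta>
  proof -
    have "0 < (\<phi> \<theta>)\<^sup>2"
      using nonzero[OF that] by simp
    then show ?thesis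
      unfolding \<psi>_def using \<phi>'[OF that]
      by (auto intro!: derivative_eq_intros simp: field_simps power2_eq_square)
  qed
  have \<psi>'_bound: "\<bar>2 * (\<phi>' \<theta> / \<phi> \<theta>)\<bar> \<le> 2 * K" if "\<theta> \<in> {0..t}" for \<theta>
    using \<phi>'_bound[OF that] nonzero[OF that] by (simp add: abs_divide divide_le_eq)
  have "norm (\<psi> t - \<psi> 0) \<le> 2 * K * norm (t - 0)"
    by (rule field_differentiable_bound[where S = "{0..t}"])
      (use \<psi>' \<psi>'_bound t in \<open>auto intro: has_field_derivative_at_within\<close>)
  then have "\<psi> 0 - 2 * (K * t) \<le> \<psi> t"
    using t by (simp add: abs_le_iff)
  then have "exp (\<psi> 0 - 2 * (K * t)) \<le> exp (\<psi> t)"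
    by simp
  then have "(\<phi> 0)\<^sup>2 * exp (- (2 * (K * t))) \<le> (\<phi> t)\<^sup>2"
    using nonzero[of 0] nonzero[of t] t by (simp add: \<psi>_def exp_diff exp_minus divide_inverse)
  then have "(\<bar>\<phi> 0\<bar> * exp (- (K * t)))\<^sup>2 \<le> \<bar>\<phi> t\<bar>\<^sup>2"
    by (simp add: power_mult_distrib flip: exp_double)
  then show ?thesis
    by (rule power2_le_imp_le) simp
qed

(* Gronwall on [0, r] for every r below the first zero s gives a positive lower bound for |phi|,
   which survives the limit r -> s. *)
lemma nonzero_if_log_derivative_bounded:
  fixes \<phi> \<phi>' :: "real \<Rightarrow> real"
  assumes \<phi>': "\<And>\<theta>. (\<phi> has_real_derivative \<phi>' \<theta>) (at \<theta>)"
    and "\<phi> 0 \<noteq> 0"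
    and \<phi>'_bound: "\<And>r. r \<in> {0..T} \<Longrightarrow> (\<And>\<theta>. \<theta> \<in> {0..r} \<Longrightarrow> \<phi> \<theta> \<noteq> 0) \<Longrightarrow> \<bar>\<phi>' r\<bar> \<le> K * \<bar>\<phi> r\<bar>"
    and "t \<in> {0..T}"
  shows "\<phi> t \<noteq> 0"
proof
  assume "\<phi> t = 0"
  have cont: "continuous_on UNIV \<phi>"
    using \<phi>' by (meson DERIV_isCont continuous_at_imp_continuous_on)
  define Z where "Z = {0..t} \<inter> \<phi> -` {0}"
  have "Z \<noteq> {}" "bdd_below Z"
    using \<open>\<phi> t = 0\<close> \<open>t \<in> {0..T}\<close> unfolding Z_def by auto
  moreover have "closed Z"
    unfolding Z_def by (intro closed_Int closed_vimage cont) auto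
  ultimately have "Inf Z \<in> Z"
    by (rule closed_contains_Inf)
  define s where "s = Inf Z"
  have "s \<in> {0..t}" "\<phi> s = 0"
    using \<open>Inf Z \<in> Z\<close> unfolding s_def Z_def by auto
  have before_s: "\<phi> \<theta> \<noteq> 0" if "\<theta> \<in> {0..<s}" for \<theta>
    using cInf_lower[of \<theta> Z] \<open>bdd_below Z\<close> \<open>s \<in> {0..t}\<close> that unfolding s_def Z_def by force
  have lower_bound: "\<bar>\<phi> 0\<bar> * exp (- (K * r)) \<le> \<bar>\<phi> r\<bar>" if "r \<in> {0..<s}" for r
  proof (rule abs_ge_exp_if_log_derivative_bounded)
    show "\<bar>\<phi>' \<theta>\<bar> \<le> K * \<bar>\<phi> \<theta>\<bar>" if "\<theta> \<in> {0..r}" for \<theta>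
      using that \<open>r \<in> {0..<s}\<close> \<open>s \<in> {0..t}\<close> \<open>t \<in> {0..T}\<close> by (intro \<phi>'_bound before_s) auto
  qed (use that \<phi>' before_s in auto)
  moreover have "s \<noteq> 0"
    using \<open>\<phi> s = 0\<close> \<open>\<phi> 0 \<noteq> 0\<close> by auto
  then have "s \<in> closure {0..<s}"
    using \<open>s \<in> {0..t}\<close> by simp
  have "0 \<le> \<bar>\<phi> s\<bar> - \<bar>\<phi> 0\<bar> * exp (- (K * s))"
  proof (rule continuous_ge_on_closure[where f = "\<lambda>r. \<bar>\<phi> r\<bar> - \<bar>\<phi> 0\<bar> * exp (- (K * r))"])
    show "continuous_on (closure {0..<s}) (\<lambda>r. \<bar>\<phi> r\<bar> - \<bar>\<phi> 0\<bar> * exp (- (K * r)))"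
      by (intro continuous_intros continuous_on_subset[OF cont]) simp
  qed (use lower_bound \<open>s \<in> closure {0..<s}\<close> in auto)
  then show False
    using \<open>\<phi> s = 0\<close> \<open>\<phi> 0 \<noteq> 0\<close> by (simp add: mult_le_0_iff)
qed

definition elasticity :: "(real \<Rightarrow> real) \<Rightarrow> (real \<Rightarrow> real) \<Rightarrow> real \<Rightarrow> real" where
  "elasticity f f' z = z * f' z / f z"

lemma abs_divide_eq_abs_mult_divide_square: "c \<noteq> 0 \<Longrightarrow> \<bar>a / c\<bar> = \<bar>a * c\<bar> / c\<^sup>2" for a c :: real
  by (simp add: abs_divide abs_mult field_simps mult.assoc power2_eq_square)

lemma abs_le_one_plus_square: "\<bar>u\<bar> \<le> 1 + u\<^sup>2" for u :: real
proof -
  have "0 \<le> (\<bar>u\<bar> - 1)\<^sup>2 + \<bar>u\<bar>"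
    by simp
  then show ?thesis
    by (simp add: power2_eq_square algebra_simps)
qed

lemma elasticity_riccati_bound:
  fixes f f' f'' :: "real \<Rightarrow> real"
  assumes key: "\<bar>z\<^sup>2 * f'' z * f z\<bar> \<le> A * ((f z)\<^sup>2 + (z * f' z)\<^sup>2)" and "f z \<noteq> 0"
  shows "\<bar>elasticity f f' z + z\<^sup>2 * f'' z / f z - (elasticity f f' z)\<^sup>2\<bar> \<le> (A + 2) * (1 + (elasticity f f' z)\<^sup>2)"
proof -
  have "\<bar>z\<^sup>2 * f'' z / f z\<bar> = \<bar>z\<^sup>2 * f'' z * f z\<bar> / (f z)\<^sup>2"
    using \<open>f z \<noteq> 0\<close> by (rule abs_divide_eq_abs_mult_divide_square)
  also have "\<dots> \<le> A * ((f z)\<^sup>2 + (z * f' z)\<^sup>2) / (f z)\<^sup>2"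
    using key by (simp add: divide_right_mono)
  also have "\<dots> = A * (1 + (elasticity f f' z)\<^sup>2)"
  proof -
    have "A * (P\<^sup>2 + Q\<^sup>2) / P\<^sup>2 = A * (1 + (Q / P)\<^sup>2)" if "P \<noteq> 0" for P Q :: real
      using that by (simp add: field_simps)
    from this[OF \<open>f z \<noteq> 0\<close>] show ?thesis
      by (simp add: elasticity_def)
  qed
  finally have w: "\<bar>z\<^sup>2 * f'' z / f z\<bar> \<le> A * (1 + (elasticity f f' z)\<^sup>2)" .
  have "\<bar>u + w - u\<^sup>2\<bar> \<le> (A + 2) * (1 + u\<^sup>2)" if "\<bar>w\<bar> \<le> A * (1 + u\<^sup>2)" for u w :: real
    using that abs_le_one_plus_square[of u]
    by (simp add: algebra_simps abs_le_iff) (use zero_le_power2[of u] in linarith)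
  from this[OF w] show ?thesis .
qed

lemma elasticity_along_exp_path_deriv:
  fixes f f' f'' :: "real \<Rightarrow> real" and x S \<theta> :: real
  defines "z \<equiv> x * exp (\<theta> * S)"
  assumes f': "\<And>z. (f has_real_derivative f' z) (at z)"
    and f'': "\<And>z. (f' has_real_derivative f'' z) (at z)"
    and "f z \<noteq> 0"
  shows "((\<lambda>\<theta>. elasticity f f' (x * exp (\<theta> * S))) has_real_derivative
    S * (elasticity f f' z + z\<^sup>2 * f'' z / f z - (elasticity f f' z)\<^sup>2)) (at \<theta>)"
proof -
  have path: "((\<lambda>\<theta>. x * exp (\<theta> * S)) has_real_derivative S * (x * exp (\<theta> * S))) (at \<theta>)"
    by (auto intro!: derivative_eq_intros)
  have quotient_rule: "((S * Z * F1 + F2 * (S * Z) * Z) * P - Z * F1 * (F1 * (S * Z))) / (P * P)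
      = S * (Z * F1 / P + Z\<^sup>2 * F2 / P - (Z * F1 / P)\<^sup>2)" if "P \<noteq> 0" for Z F1 F2 P :: real
    using that by (simp add: field_simps power2_eq_square)
  show ?thesis
    unfolding elasticity_def z_def
    by (rule DERIV_cong[OF DERIV_divide[OF DERIV_mult[OF path DERIV_chain2[OF f'' path]]
          DERIV_chain2[OF f' path] \<open>f z \<noteq> 0\<close>[unfolded z_def]]])
      (rule quotient_rule[OF \<open>f z \<noteq> 0\<close>[unfolded z_def]])
qed

lemma elasticity_bound_along_exp_path:
  fixes f f' f'' :: "real \<Rightarrow> real"
  assumes f': "\<And>z. (f has_real_derivative f' z) (at z)"
    and f'': "\<And>z. (f' has_real_derivative f'' z) (at z)"
    and key: "\<And>z. \<bar>z\<^sup>2 * f'' z * f z\<bar> \<le> A * ((f z)\<^sup>2 + (z * f' z)\<^sup>2)"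
    and "0 \<le> A" and small: "\<bar>S\<bar> * (A + 2) * (1 + \<bar>elasticity f f' x\<bar>) \<le> 1 / 2"
    and "t \<in> {0..1}" and nonzero: "\<And>\<theta>. \<theta> \<in> {0..t} \<Longrightarrow> f (x * exp (\<theta> * S)) \<noteq> 0"
  shows "1 + \<bar>elasticity f f' (x * exp (t * S))\<bar> \<le> 4 * (1 + \<bar>elasticity f f' x\<bar>)"
proof -
  define e where "e \<theta> = elasticity f f' (x * exp (\<theta> * S))" for \<theta>
  define e' where "e' \<theta> = S * (e \<theta> + (x * exp (\<theta> * S))\<^sup>2 * f'' (x * exp (\<theta> * S)) / f (x * exp (\<theta> * S))
    - (e \<theta>)\<^sup>2)" for \<theta>
  have "1 + \<bar>e t\<bar> \<le> 4 * (1 + \<bar>e 0\<bar>)"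
  proof (rule riccati_growth_bound[where h' = e' and L = "\<bar>S\<bar> * (A + 2)"])
    show "0 \<le> t"
      using \<open>t \<in> {0..1}\<close> by simp
    show "(e has_real_derivative e' \<theta>) (at \<theta>)" if "\<theta> \<in> {0..t}" for \<theta>
      unfolding e_def e'_def by (rule elasticity_along_exp_path_deriv[OF f' f'' nonzero[OF that]])
    show "\<bar>e' \<theta>\<bar> \<le> \<bar>S\<bar> * (A + 2) * (1 + (e \<theta>)\<^sup>2)" if "\<theta> \<in> {0..t}" for \<theta>
      using mult_left_mono[OF elasticity_riccati_bound[where f = f and f' = f' and f'' = f'' and z = "x * exp (\<theta> * S)",
          OF key nonzero[OF that]] abs_ge_zero[of S]]
      by (simp add: e_def e'_def abs_mult mult.assoc)
    have "\<bar>S\<bar> * (A + 2) * t \<le> \<bar>S\<bar> * (A + 2)"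
      using \<open>t \<in> {0..1}\<close> \<open>0 \<le> A\<close> by (simp add: mult_left_le)
    then have "2 * (\<bar>S\<bar> * (A + 2) * t) * (1 + \<bar>e 0\<bar>) \<le> 2 * (\<bar>S\<bar> * (A + 2)) * (1 + \<bar>e 0\<bar>)"
      by (rule mult_right_mono[OF mult_left_mono]) simp_all
    then show "2 * (\<bar>S\<bar> * (A + 2) * t) * (1 + \<bar>e 0\<bar>) \<le> 1"
      using small by (simp add: e_def)
  qed
  then show ?thesis
    by (simp add: e_def)
qed

lemma elasticity_bound_along_path:
  fixes f f' f'' :: "real \<Rightarrow> real"
  assumes f': "\<And>z. (f has_real_derivative f' z) (at z)"
    and f'': "\<And>z. (f' has_real_derivative f'' z) (at z)"
    and key: "\<And>z. \<bar>z\<^sup>2 * f'' z * f z\<bar> \<le> A * ((f z)\<^sup>2 + (z * f' z)\<^sup>2)"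
    and "0 \<le> A" and "f x \<noteq> 0"
    and small: "\<bar>S\<bar> * (A + 2) * (1 + \<bar>elasticity f f' x\<bar>) \<le> 1 / 2"
  shows "f (x * exp S) \<noteq> 0"
    and "1 + \<bar>elasticity f f' (x * exp S)\<bar> \<le> 4 * (1 + \<bar>elasticity f f' x\<bar>)"
proof -
  define \<mu> where "\<mu> = 1 + \<bar>elasticity f f' x\<bar>"
  define g where "g \<theta> = x * exp (\<theta> * S)" for \<theta>
  have "\<bar>S\<bar> * 2 * \<mu> \<le> \<bar>S\<bar> * (A + 2) * \<mu>"
    using \<open>0 \<le> A\<close> by (intro mult_right_mono mult_left_mono) (auto simp: \<mu>_def)
  then have S_small: "\<bar>S\<bar> * \<mu> \<le> 1 / 4"
    using small unfolding \<mu>_def by linarith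
  have bound: "1 + \<bar>elasticity f f' (g t)\<bar> \<le> 4 * \<mu>"
    if "t \<in> {0..1}" "\<And>\<theta>. \<theta> \<in> {0..t} \<Longrightarrow> f (g \<theta>) \<noteq> 0" for t
    using elasticity_bound_along_exp_path[OF f' f'' key \<open>0 \<le> A\<close> small] that
    by (simp add: g_def \<mu>_def)
  have nonzero: "f (g t) \<noteq> 0" if "t \<in> {0..1}" for t
  proof (rule nonzero_if_log_derivative_bounded[where \<phi> = "\<lambda>\<theta>. f (g \<theta>)" and K = 1 and T = 1])
    show "((\<lambda>\<theta>. f (g \<theta>)) has_real_derivative f' (g \<theta>) * (S * g \<theta>)) (at \<theta>)" for \<theta>
      by (rule DERIV_chain2[OF f']) (auto simp: g_def intro!: derivative_eq_intros)
    show "f (g 0) \<noteq> 0"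
      using \<open>f x \<noteq> 0\<close> by (simp add: g_def)
    show "t \<in> {0..1}"
      by (rule that)
    fix r assume r: "r \<in> {0..1}" and nonzero: "\<And>\<theta>. \<theta> \<in> {0..r} \<Longrightarrow> f (g \<theta>) \<noteq> 0"
    have "\<bar>f' (g r) * (S * g r)\<bar> = \<bar>S\<bar> * \<bar>elasticity f f' (g r)\<bar> * \<bar>f (g r)\<bar>"
      using nonzero[of r] r by (simp add: elasticity_def abs_mult)
    also have "\<dots> \<le> \<bar>S\<bar> * (4 * \<mu>) * \<bar>f (g r)\<bar>"
      using bound[OF r nonzero] by (intro mult_right_mono mult_left_mono) auto
    also have "\<dots> \<le> 1 * \<bar>f (g r)\<bar>"
      using S_small by (intro mult_right_mono) auto
    finally show "\<bar>f' (g r) * (S * g r)\<bar> \<le> 1 * \<bar>f (g r)\<bar>" .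
  qed
  have "g 1 = x * exp S"
    by (simp add: g_def)
  then show "f (x * exp S) \<noteq> 0"
    and "1 + \<bar>elasticity f f' (x * exp S)\<bar> \<le> 4 * (1 + \<bar>elasticity f f' x\<bar>)"
    using nonzero[of 1] bound[of 1] nonzero unfolding \<mu>_def by auto
qed

lemma rel_dist_zero_right: "rel_dist y 0 = (if y = 0 then 0 else \<infinity>)"
  by (simp add: rel_dist_def)

lemma rel_dist_lessE:
  assumes "x \<noteq> 0" "rel_dist y x < ereal r"
  obtains S where "y = x * exp S" "\<bar>S\<bar> < r"
proof -
  have "y * x > 0"
    using assms by (auto simp: rel_dist_def split: if_splits)
  then have "y / x > 0"
    by (simp add: zero_less_divide_iff zero_less_mult_iff)
  define S where "S = ln (y / x)"
  have "y = x * exp S"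
    using \<open>y / x > 0\<close> assms(1) by (simp add: S_def)
  have "\<bar>S\<bar> = \<bar>ln (x / y)\<bar>"
    using \<open>y / x > 0\<close> by (simp add: S_def ln_div abs_minus_commute)
  then have "\<bar>S\<bar> < r"
    using assms \<open>y * x > 0\<close> by (simp add: rel_dist_def)
  with \<open>y = x * exp S\<close> show ?thesis
    by (rule that)
qed

lemma one_divide_ereal: "r \<noteq> 0 \<Longrightarrow> 1 / ereal r = ereal (1 / r)"
  by (simp add: divide_ereal_def inverse_eq_divide)

lemma mu_cond_eq_of_derivative:
  assumes "(f has_real_derivative d) (at x)" "x \<noteq> 0" "f x \<noteq> 0"
  shows "mu_cond f x = ereal (1 + \<bar>x * d / f x\<bar>)"
  using assms by (simp add: mu_cond_def cond_num_def DERIV_imp_deriv abs_mult)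

lemma mu_cond_bound_near_nonroot:
  fixes f f' f'' :: "real \<Rightarrow> real" and x :: real
  defines "\<mu> \<equiv> 1 + \<bar>elasticity f f' x\<bar>"
  assumes f': "\<And>z. (f has_real_derivative f' z) (at z)"
    and f'': "\<And>z. (f' has_real_derivative f'' z) (at z)"
    and key: "\<And>z. \<bar>z\<^sup>2 * f'' z * f z\<bar> \<le> A * ((f z)\<^sup>2 + (z * f' z)\<^sup>2)"
    and "0 \<le> A" and "x \<noteq> 0" and "f x \<noteq> 0"
    and close: "rel_dist y x < ereal (1 / (2 * (A + 2) * \<mu>))"
  shows "mu_cond f y \<le> ereal (4 * \<mu>)"
proof -
  obtain S where y: "y = x * exp S" and "\<bar>S\<bar> < 1 / (2 * (A + 2) * \<mu>)"
    by (rule rel_dist_lessE[OF \<open>x \<noteq> 0\<close> close])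
  moreover have "0 < 2 * (A + 2) * \<mu>"
    using \<open>0 \<le> A\<close> by (simp add: \<mu>_def add_pos_nonneg)
  ultimately have "\<bar>S\<bar> * (2 * (A + 2) * \<mu>) < 1"
    by (simp add: pos_less_divide_eq)
  then have "\<bar>S\<bar> * (A + 2) * (1 + \<bar>elasticity f f' x\<bar>) \<le> 1 / 2"
    by (simp add: \<mu>_def algebra_simps)
  then have "f y \<noteq> 0" and "1 + \<bar>elasticity f f' y\<bar> \<le> 4 * \<mu>"
    using elasticity_bound_along_path[OF f' f'' key \<open>0 \<le> A\<close> \<open>f x \<noteq> 0\<close>] by (simp_all add: y \<mu>_def)
  moreover have "y \<noteq> 0"
    using \<open>x \<noteq> 0\<close> by (simp add: y)
  ultimately show ?thesis
    by (simp add: mu_cond_eq_of_derivative[OF f'[of y]] elasticity_def)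
qed

theorem amenable_if_second_order_bound:
  fixes f f' f'' :: "real \<Rightarrow> real"
  assumes f': "\<And>z. (f has_real_derivative f' z) (at z)"
    and f'': "\<And>z. (f' has_real_derivative f'' z) (at z)"
    and key: "\<And>z. \<bar>z\<^sup>2 * f'' z * f z\<bar> \<le> A * ((f z)\<^sup>2 + (z * f' z)\<^sup>2)"
    and "0 \<le> A"
  shows "amenable f UNIV"
proof -
  define C where "C = 2 * (A + 2)"
  have "C \<ge> 4"
    using \<open>0 \<le> A\<close> by (simp add: C_def)
  have "mu_cond f y \<le> ereal C * mu_cond f x"
    if "cond_num f x < \<infinity>" and close: "rel_dist y x < 1 / (ereal C * mu_cond f x)" for x y
  proof (cases "x = 0")
    case True
    then have "mu_cond f x = 1"
      by (simp add: mu_cond_def cond_num_def)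
    then have "y = 0"
      using close \<open>C \<ge> 4\<close> True by (auto simp: rel_dist_zero_right split: if_splits)
    then show ?thesis
      using \<open>mu_cond f x = 1\<close> True \<open>C \<ge> 4\<close> by simp
  next
    case False
    with that(1) have "f x \<noteq> 0"
      by (auto simp: cond_num_def split: if_splits)
    define \<mu> where "\<mu> = 1 + \<bar>elasticity f f' x\<bar>"
    have "\<mu> \<ge> 1"
      by (simp add: \<mu>_def)
    have mu_x: "mu_cond f x = ereal \<mu>"
      unfolding \<mu>_def elasticity_def by (rule mu_cond_eq_of_derivative[OF f'[of x] False \<open>f x \<noteq> 0\<close>])
    have "rel_dist y x < ereal (1 / (2 * (A + 2) * \<mu>))"
      using close \<open>C \<ge> 4\<close> by (simp add: mu_x one_divide_ereal C_def \<mu>_def)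
    then have "mu_cond f y \<le> ereal (4 * \<mu>)"
      unfolding \<mu>_def by (rule mu_cond_bound_near_nonroot[OF f' f'' key \<open>0 \<le> A\<close> False \<open>f x \<noteq> 0\<close>])
    also have "\<dots> \<le> ereal C * mu_cond f x"
      using \<open>C \<ge> 4\<close> \<open>\<mu> \<ge> 1\<close> by (simp add: mu_x)
    finally show ?thesis .
  qed
  then show ?thesis
    unfolding amenable_def using \<open>C \<ge> 4\<close> by (intro exI[of _ C]) auto
qed

lemma bigo_nhds_if_isCont:
  fixes f g :: "'a::t2_space \<Rightarrow> 'b::real_normed_field"
  assumes "isCont f a" "isCont g a" "g a \<noteq> 0"
  shows "f \<in> O[nhds a](g)"
proof (rule bigoI_tendsto)
  show "((\<lambda>x. f x / g x) \<longlongrightarrow> f a / g a) (nhds a)"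
    using assms by (intro tendsto_divide) (simp_all add: isCont_def tendsto_at_iff_tendsto_nhds)
  show "\<forall>\<^sub>F x in nhds a. g x \<noteq> 0"
    using assms by (intro tendsto_imp_eventually_ne) (simp_all add: isCont_def tendsto_at_iff_tendsto_nhds)
qed

lemma norm_le_mult_norm_mono: "norm a \<le> c * norm b \<Longrightarrow> c \<le> C \<Longrightarrow> norm a \<le> C * norm b"
  by (meson mult_right_mono norm_ge_zero order_trans)

lemma uniform_bound_on_compact_if_bigo_nhds:
  fixes f g :: "'a::topological_space \<Rightarrow> 'b::real_normed_field"
  assumes "compact K" and local: "\<And>a. a \<in> K \<Longrightarrow> f \<in> O[nhds a](g)"
  shows "\<exists>C. \<forall>x\<in>K. norm (f x) \<le> C * norm (g x)"
proof -
  have "\<exists>c U. open U \<and> a \<in> U \<and> (\<forall>x\<in>U. norm (f x) \<le> c * norm (g x))" if "a \<in> K" for a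
  proof -
    from local[OF that] obtain c where "\<forall>\<^sub>F x in nhds a. norm (f x) \<le> c * norm (g x)"
      by (elim landau_o.bigE)
    then show ?thesis
      unfolding eventually_nhds by blast
  qed
  then obtain c U where U: "\<And>a. a \<in> K \<Longrightarrow> open (U a)" "\<And>a. a \<in> K \<Longrightarrow> a \<in> U a"
    and near: "\<And>a x. a \<in> K \<Longrightarrow> x \<in> U a \<Longrightarrow> norm (f x) \<le> c a * norm (g x)"
    by metis
  obtain K' where K': "K' \<subseteq> K" "finite K'" "K \<subseteq> (\<Union>a\<in>K'. U a)"
    by (rule compactE_image[OF \<open>compact K\<close>, of K U]) (use U in auto)
  have "norm (f x) \<le> (\<Sum>a\<in>K'. \<bar>c a\<bar>) * norm (g x)" if "x \<in> K" for x
  proof -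
    obtain a where "a \<in> K'" "x \<in> U a"
      using K'(3) \<open>x \<in> K\<close> by blast
    have c_le: "c a \<le> (\<Sum>a\<in>K'. \<bar>c a\<bar>)"
      using member_le_sum[of a K' "\<lambda>a. \<bar>c a\<bar>"] \<open>a \<in> K'\<close> K'(2) abs_ge_self[of "c a"] by simp
    have "a \<in> K"
      using \<open>a \<in> K'\<close> K'(1) by blast
    show ?thesis
      by (rule norm_le_mult_norm_mono[OF near[OF \<open>a \<in> K\<close> \<open>x \<in> U a\<close>] c_le])
  qed
  then show ?thesis
    by blast
qed

lemma uniform_bound_if_bigo_nhds_and_at_infinity:
  fixes f g :: "'a::{real_normed_vector,heine_borel} \<Rightarrow> 'b::real_normed_field"
  assumes local: "\<And>a. f \<in> O[nhds a](g)" and infinity: "f \<in> O[at_infinity](g)"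
  shows "\<exists>C>0. \<forall>x. norm (f x) \<le> C * norm (g x)"
proof -
  from infinity obtain c where "c > 0" "\<forall>\<^sub>F x in at_infinity. norm (f x) \<le> c * norm (g x)"
    by (elim landau_o.bigE)
  then obtain R where far: "\<And>x. R \<le> norm x \<Longrightarrow> norm (f x) \<le> c * norm (g x)"
    by (auto simp: eventually_at_infinity)
  obtain c' where near: "\<And>x. x \<in> cball 0 R \<Longrightarrow> norm (f x) \<le> c' * norm (g x)"
    using uniform_bound_on_compact_if_bigo_nhds[OF compact_cball local] by blast
  have "norm (f x) \<le> (c + \<bar>c'\<bar>) * norm (g x)" for x
  proof (cases "R \<le> norm x")
    case True
    from far[OF True] show ?thesis
      by (rule norm_le_mult_norm_mono) simp
  next
    case False
    then have "x \<in> cball 0 R"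
      by simp
    from near[OF this] show ?thesis
      by (rule norm_le_mult_norm_mono) (use \<open>c > 0\<close> in linarith)
  qed
  moreover have "c + \<bar>c'\<bar> > 0"
    using \<open>c > 0\<close> by linarith
  ultimately show ?thesis
    by blast
qed

lemma poly_bigo_at_infinity:
  fixes p q :: "real poly"
  assumes "q \<noteq> 0" "degree p \<le> degree q"
  shows "poly p \<in> O[at_infinity](poly q)"
proof -
  obtain L where "((\<lambda>x. poly p x / poly q x) \<longlongrightarrow> L) at_infinity"
  proof (cases "degree p < degree q")
    case True
    then show ?thesis using poly_divide_tendsto_0_at_infinity that by blast
  next
    case False
    then have deg: "degree p = degree q"
      using assms by simp
    have lim: "((\<lambda>x. (poly p x / x ^ degree q) / (poly q x / x ^ degree q)) \<longlongrightarrow> lead_coeff p / lead_coeff q) at_infinity"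
      using poly_divide_tendsto_aux[of p] poly_divide_tendsto_aux[of q] assms(1)
      by (intro tendsto_divide) (simp_all add: deg)
    have "\<forall>\<^sub>F x in at_infinity. (poly p x / x ^ degree q) / (poly q x / x ^ degree q) = poly p x / poly q x"
      by (rule eventually_at_infinityI[of 1]) auto
    from tendsto_cong[OF this] lim show ?thesis
      by (intro that) simp
  qed
  then show ?thesis
    using poly_eventually_not_zero[OF assms(1)] by (rule bigoI_tendsto)
qed

lemma power_dvd_pderiv:
  fixes p :: "'a::idom poly"
  assumes "[:-a, 1:] ^ n dvd p"
  shows "[:-a, 1:] ^ (n - 1) dvd pderiv p"
proof -
  obtain r where p: "p = [:-a, 1:] ^ n * r"
    using assms by (elim dvdE)
  have "[:-a, 1:] ^ (n - 1) dvd [:-a, 1:] ^ n"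
    by (rule le_imp_power_dvd) simp
  then have "[:-a, 1:] ^ (n - 1) dvd [:-a, 1:] ^ n * pderiv r"
    by (rule dvd_mult2)
  moreover have "[:-a, 1:] ^ (n - 1) dvd r * smult (of_nat n) ([:-a, 1:] ^ (n - 1) * pderiv [:-a, 1:])"
    by (intro dvd_mult dvd_smult dvd_mult2) simp
  ultimately show ?thesis
    unfolding p pderiv_mult pderiv_power by (rule dvd_add)
qed

lemma second_order_bigo_nhds_if_factorization:
  fixes p c u v :: "real poly"
  assumes p: "p = c * u" and euler: "[:0, 1:] * pderiv p = c * v"
    and dvd: "c dvd [:0, 1:] ^ 2 * pderiv (pderiv p) * u"
    and nonzero: "poly u a \<noteq> 0 \<or> poly v a \<noteq> 0"
  shows "(\<lambda>x. x\<^sup>2 * poly (pderiv (pderiv p)) x * poly p x)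
    \<in> O[nhds a](\<lambda>x. (poly p x)\<^sup>2 + (x * poly (pderiv p) x)\<^sup>2)"
proof -
  obtain w where w: "[:0, 1:] ^ 2 * pderiv (pderiv p) * u = c * w"
    using dvd by (elim dvdE)
  have p_eval: "poly p x = poly c x * poly u x" for x
    by (simp add: p)
  have F: "x\<^sup>2 * poly (pderiv (pderiv p)) x * poly p x = (poly c x)\<^sup>2 * poly w x" for x
    using arg_cong[OF w, of "\<lambda>q. poly q x * poly c x"] by (simp add: p_eval power2_eq_square mult_ac)
  have G: "(poly p x)\<^sup>2 + (x * poly (pderiv p) x)\<^sup>2 = (poly c x)\<^sup>2 * ((poly u x)\<^sup>2 + (poly v x)\<^sup>2)" for x
    using arg_cong[OF euler, of "\<lambda>q. poly q x"] by (simp add: p_eval power_mult_distrib distrib_left)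
  have "(poly u a)\<^sup>2 + (poly v a)\<^sup>2 \<noteq> 0"
    using nonzero by (simp add: sum_power2_eq_zero_iff)
  then have "poly w \<in> O[nhds a](\<lambda>x. (poly u x)\<^sup>2 + (poly v x)\<^sup>2)"
    by (intro bigo_nhds_if_isCont) (auto intro!: continuous_intros)
  then have "(\<lambda>x. (poly c x)\<^sup>2 * poly w x) \<in> O[nhds a](\<lambda>x. (poly c x)\<^sup>2 * ((poly u x)\<^sup>2 + (poly v x)\<^sup>2))"
    by (rule landau_o.big.mult_left)
  then show ?thesis
    unfolding F G .
qed

lemma second_order_factorization_at_zero:
  fixes p :: "real poly"
  assumes "p \<noteq> 0"
  obtains c u v where "p = c * u" "[:0, 1:] * pderiv p = c * v"
    "c dvd [:0, 1:] ^ 2 * pderiv (pderiv p) * u" "poly u 0 \<noteq> 0"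
proof -
  define k where "k = order 0 p"
  obtain r where r: "p = [:0, 1:] ^ k * r" "\<not> [:0, 1:] dvd r"
    using order_decomp[OF assms, of 0] by (auto simp: k_def)
  have "[:0, 1:] ^ k dvd p"
    by (simp add: r)
  then have p': "[:0, 1:] ^ (k - 1) dvd pderiv p"
    using power_dvd_pderiv[of 0 k p] by simp
  then have p'': "[:0, 1:] ^ (k - 1 - 1) dvd pderiv (pderiv p)"
    using power_dvd_pderiv[of 0 "k - 1" "pderiv p"] by simp
  have "[:0, 1:] ^ k dvd [:0, 1:] ^ Suc (k - 1)"
    by (rule le_imp_power_dvd) simp
  also have "\<dots> dvd [:0, 1:] * pderiv p"
    unfolding power_Suc by (rule mult_dvd_mono[OF dvd_refl p'])
  finally obtain v where v: "[:0, 1:] * pderiv p = [:0, 1:] ^ k * v"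
    by (elim dvdE)
  have "[:0, 1:] ^ k dvd [:0, 1:] ^ (2 + (k - 1 - 1))"
    by (rule le_imp_power_dvd) simp
  also have "\<dots> dvd [:0, 1:] ^ 2 * pderiv (pderiv p)"
    unfolding power_add by (rule mult_dvd_mono[OF dvd_refl p''])
  finally have "[:0, 1:] ^ k dvd [:0, 1:] ^ 2 * pderiv (pderiv p) * r"
    by (rule dvd_mult2)
  moreover have "poly r 0 \<noteq> 0"
    using r(2) by (simp add: poly_eq_0_iff_dvd)
  ultimately show ?thesis
    by (rule that[OF r(1) v])
qed

(* At a root a \<noteq> 0 of order k, x p' vanishes only to order k - 1, so c = (x - a) ^ (k - 1). *)
lemma second_order_factorization_at_root:
  fixes p :: "real poly"
  assumes "p \<noteq> 0" "poly p a = 0" "a \<noteq> 0"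
  obtains c u v where "p = c * u" "[:0, 1:] * pderiv p = c * v"
    "c dvd [:0, 1:] ^ 2 * pderiv (pderiv p) * u" "poly v a \<noteq> 0"
proof -
  define j where "j = order a (pderiv p)"
  have "pderiv p \<noteq> 0"
  proof
    assume "pderiv p = 0"
    then obtain b where "p = [:b:]"
      using degree0_coeffs by (auto simp: pderiv_eq_0_iff)
    then show False
      using assms(1,2) by simp
  qed
  then obtain s where s: "pderiv p = [:-a, 1:] ^ j * s" "\<not> [:-a, 1:] dvd s"
    using order_decomp by (auto simp: j_def)
  have "order a p = Suc j"
    unfolding j_def by (rule order_pderiv[OF assms(1,2)])
  then have "[:-a, 1:] ^ Suc j dvd p"
    using order_1[of a p] by simp
  then obtain r where "p = [:-a, 1:] ^ Suc j * r"
    by (elim dvdE)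
  then have r: "p = [:-a, 1:] ^ j * ([:-a, 1:] * r)"
    by (simp only: power_Suc2 mult.assoc)
  have euler: "[:0, 1:] * pderiv p = [:-a, 1:] ^ j * ([:0, 1:] * s)"
    by (simp only: s mult_ac)
  have "[:-a, 1:] ^ (j - 1) dvd pderiv (pderiv p)"
    using power_dvd_pderiv[of a j "pderiv p"] by (simp add: s)
  have "[:-a, 1:] ^ j dvd [:-a, 1:] ^ Suc (j - 1)"
    by (rule le_imp_power_dvd) simp
  also have "\<dots> dvd pderiv (pderiv p) * [:-a, 1:]"
    unfolding power_Suc2 by (rule mult_dvd_mono[OF \<open>[:-a, 1:] ^ (j - 1) dvd pderiv (pderiv p)\<close> dvd_refl])
  also have "\<dots> dvd [:0, 1:] ^ 2 * r * (pderiv (pderiv p) * [:-a, 1:])"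
    by (rule dvd_triv_right)
  also have "\<dots> = [:0, 1:] ^ 2 * pderiv (pderiv p) * ([:-a, 1:] * r)"
    by (simp only: mult_ac)
  finally have dvd: "[:-a, 1:] ^ j dvd [:0, 1:] ^ 2 * pderiv (pderiv p) * ([:-a, 1:] * r)" .
  have "poly ([:0, 1:] * s) a \<noteq> 0"
    using s(2) \<open>a \<noteq> 0\<close> by (simp add: poly_eq_0_iff_dvd)
  then show ?thesis
    by (rule that[OF r euler dvd])
qed

lemma degree_second_order_le:
  fixes p :: "real poly"
  shows "degree ([:0, 1:] ^ 2 * pderiv (pderiv p)) \<le> degree p"
proof (cases "degree p < 2")
  case True
  then have "pderiv (pderiv p) = 0"
    by (simp add: pderiv_eq_0_iff degree_pderiv)
  then show ?thesis
    by simp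
next
  case False
  have "degree ([:0, 1:] ^ 2 * pderiv (pderiv p)) \<le> degree ([:0, 1:] ^ 2 :: real poly) + degree (pderiv (pderiv p))"
    by (rule degree_mult_le)
  also have "\<dots> = degree p"
    using False by (simp add: degree_pderiv degree_linear_power)
  finally show ?thesis .
qed

lemma poly_second_order_bigo_nhds:
  fixes p :: "real poly"
  assumes "p \<noteq> 0"
  shows "(\<lambda>x. x\<^sup>2 * poly (pderiv (pderiv p)) x * poly p x)
    \<in> O[nhds a](\<lambda>x. (poly p x)\<^sup>2 + (x * poly (pderiv p) x)\<^sup>2)"
proof -
  consider "poly p a \<noteq> 0" | "a = 0" | "a \<noteq> 0" "poly p a = 0"
    by blast
  then obtain c u v where "p = c * u" "[:0, 1:] * pderiv p = c * v"
    "c dvd [:0, 1:] ^ 2 * pderiv (pderiv p) * u" "poly u a \<noteq> 0 \<or> poly v a \<noteq> 0"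
  proof cases
    case 1
    then show ?thesis
      by (intro that[of 1 p "[:0, 1:] * pderiv p"]) simp_all
  next
    case 2
    obtain c u v where "p = c * u" "[:0, 1:] * pderiv p = c * v"
      "c dvd [:0, 1:] ^ 2 * pderiv (pderiv p) * u" "poly u 0 \<noteq> 0"
      by (rule second_order_factorization_at_zero[OF assms])
    then show ?thesis
      using 2 by (intro that[of c u v]) simp_all
  next
    case 3
    obtain c u v where "p = c * u" "[:0, 1:] * pderiv p = c * v"
      "c dvd [:0, 1:] ^ 2 * pderiv (pderiv p) * u" "poly v a \<noteq> 0"
      by (rule second_order_factorization_at_root[OF assms 3(2,1)])
    then show ?thesis
      by (intro that[of c u v]) simp_all
  qed
  then show ?thesis
    by (rule second_order_bigo_nhds_if_factorization)
qed

lemma poly_second_order_bigo_at_infinity: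
  fixes p :: "real poly"
  assumes "p \<noteq> 0"
  shows "(\<lambda>x. x\<^sup>2 * poly (pderiv (pderiv p)) x * poly p x)
    \<in> O[at_infinity](\<lambda>x. (poly p x)\<^sup>2 + (x * poly (pderiv p) x)\<^sup>2)"
proof -
  have "degree ([:0, 1:] ^ 2 * pderiv (pderiv p) * p) \<le> degree p + degree p"
    using degree_mult_le[of "[:0, 1:] ^ 2 * pderiv (pderiv p)" p] degree_second_order_le[of p] by linarith
  also have "\<dots> = degree (p * p)"
    using assms by (simp add: degree_mult_eq)
  finally have "poly ([:0, 1:] ^ 2 * pderiv (pderiv p) * p) \<in> O[at_infinity](poly (p * p))"
    using assms by (intro poly_bigo_at_infinity) simp_all
  moreover have "poly ([:0, 1:] ^ 2 * pderiv (pderiv p) * p) = (\<lambda>x. x\<^sup>2 * poly (pderiv (pderiv p)) x * poly p x)"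
    by (simp add: fun_eq_iff power2_eq_square)
  moreover have "poly (p * p) \<in> O[at_infinity](\<lambda>x. (poly p x)\<^sup>2 + (x * poly (pderiv p) x)\<^sup>2)"
    by (intro bigoI[of _ 1] always_eventually) (simp add: abs_mult power2_eq_square)
  ultimately show ?thesis
    by (metis landau_o.big.trans)
qed

lemma poly_second_order_bound:
  fixes p :: "real poly"
  assumes "p \<noteq> 0"
  shows "\<exists>A>0. \<forall>x. \<bar>x\<^sup>2 * poly (pderiv (pderiv p)) x * poly p x\<bar> \<le> A * ((poly p x)\<^sup>2 + (x * poly (pderiv p) x)\<^sup>2)"
  using uniform_bound_if_bigo_nhds_and_at_infinity[OF poly_second_order_bigo_nhds[OF assms]
      poly_second_order_bigo_at_infinity[OF assms]] by simp

theorem mainTheorem6: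
  fixes p :: "real poly"
  assumes "p \<noteq> 0"
  shows "amenable (poly p) UNIV"
proof -
  obtain A where "A > 0"
    and "\<And>x. \<bar>x\<^sup>2 * poly (pderiv (pderiv p)) x * poly p x\<bar> \<le> A * ((poly p x)\<^sup>2 + (x * poly (pderiv p) x)\<^sup>2)"
    using poly_second_order_bound[OF assms] by blast
  then show ?thesis
    by (intro amenable_if_second_order_bound[where A = A]) (auto intro: poly_DERIV)
qed

end
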